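(* Let $u$ be an endomorphism of a vector space $V$ of countably infinite dimension over a field $\mathbb{F}$. Assume that $u$ has no dominant eigenvalue and that $(u-\lambda\,\mathrm{id}_V)^2=0$ for some $\lambda\in\mathbb{F}$. Then $V^u$ has a good stratification.
   Context: A scalar $\mu$ is a dominant eigenvalue of $u$ if $\operatorname{rk}(u-\mu\,\mathrm{id}_V)<\dim V$. $V^u$ is the $\mathbb{F}[t]$-module with underlying space $V$ and $t\cdot x:=u(x)$. A stratification of a non-zero $\mathbb{F}[t]$-module $M$ is an increasing family $(M_\alpha)_{\alpha\in D}$ of submodules indexed by a well-ordered set $D$ such that each quotient $M_\alpha/\sum_{\beta<\alpha}M_\beta$ is non-zero and monogenous (cyclic), and $M=\sum_{\alpha\in D}M_\alpha$; its dimension sequence is $n_\alpha:=\dim_{\mathbb{F}}(M_\alpha/\sum_{\beta<\alpha}M_\beta)\in\mathbb{N}^*\cup\{+\infty\}$. It is good if (a) $n_\alpha\ge 2$ whenever $\alpha$ is the minimum of $D$ or the successor of some element of $D$, and (b) $D$ has no maximum. *)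

theory Defs
  imports Main HOL.Vector_Spaces "HOL-Library.Countable_Set"
begin

text \<open>Vector spaces are modelled via the library locale vector_space: the space V is the
whole type 'b, with scalar multiplication scale over the field 'a.\<close>

definition is_basis :: "('a::field \<Rightarrow> 'b::ab_group_add \<Rightarrow> 'b) \<Rightarrow> 'b set \<Rightarrow> bool" where
  "is_basis scale B \<longleftrightarrow> \<not> module.dependent scale B \<and> module.span scale B = UNIV"

definition countably_infinite_dim :: "('a::field \<Rightarrow> 'b::ab_group_add \<Rightarrow> 'b) \<Rightarrow> bool" where
  "countably_infinite_dim scale \<longleftrightarrow> (\<exists>B. is_basis scale B \<and> infinite B \<and> countable B)"

text \<open>rk f < dim V, as cardinals: some basis of the range of f is strictly smaller
  in cardinality than some basis of V (all bases of a space are equipotent).\<close>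
definition rank_less_dim :: "('a::field \<Rightarrow> 'b::ab_group_add \<Rightarrow> 'b) \<Rightarrow> ('b \<Rightarrow> 'b) \<Rightarrow> bool" where
  "rank_less_dim scale f \<longleftrightarrow>
     (\<exists>B C. \<not> module.dependent scale B \<and> module.span scale B = range f \<and>
            is_basis scale C \<and> (card_of B, card_of C) \<in> ordLess)"

definition dominant_eigenvalue :: "('a::field \<Rightarrow> 'b::ab_group_add \<Rightarrow> 'b) \<Rightarrow> ('b \<Rightarrow> 'b) \<Rightarrow> 'a \<Rightarrow> bool" where
  "dominant_eigenvalue scale u \<mu> \<longleftrightarrow> rank_less_dim scale (\<lambda>x. u x - scale \<mu> x)"

definition submodule :: "('a::field \<Rightarrow> 'b::ab_group_add \<Rightarrow> 'b) \<Rightarrow> ('b \<Rightarrow> 'b) \<Rightarrow> 'b set \<Rightarrow> bool" where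
  "submodule scale u N \<longleftrightarrow> module.subspace scale N \<and> u ` N \<subseteq> N"

text \<open>Sum of the submodules M beta for beta < alpha (strictly, w.r.t. the well-order r);
  the span of an empty union is the zero submodule.\<close>
definition lower_sum :: "('a::field \<Rightarrow> 'b::ab_group_add \<Rightarrow> 'b) \<Rightarrow> ('i \<times> 'i) set \<Rightarrow> ('i \<Rightarrow> 'b set) \<Rightarrow> 'i \<Rightarrow> 'b set" where
  "lower_sum scale r M \<alpha> = module.span scale (\<Union>\<beta>\<in>{\<beta>. (\<beta>, \<alpha>) \<in> r \<and> \<beta> \<noteq> \<alpha>}. M \<beta>)"

text \<open>M/N is non-zero and monogenous (cyclic as F[t]-module, t acting by u), for submodules N \<subseteq> M.\<close>
definition nonzero_cyclic_quotient :: "('a::field \<Rightarrow> 'b::ab_group_add \<Rightarrow> 'b) \<Rightarrow> ('b \<Rightarrow> 'b) \<Rightarrow> 'b set \<Rightarrow> 'b set \<Rightarrow> bool" where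
  "nonzero_cyclic_quotient scale u M N \<longleftrightarrow>
     \<not> M \<subseteq> N \<and> (\<exists>x\<in>M. M = module.span scale (N \<union> range (\<lambda>k. (u ^^ k) x)))"

text \<open>dim (M/N) \<ge> 2: there are two vectors of M linearly independent modulo N.\<close>
definition quotient_dim_ge2 :: "('a::field \<Rightarrow> 'b::ab_group_add \<Rightarrow> 'b) \<Rightarrow> 'b set \<Rightarrow> 'b set \<Rightarrow> bool" where
  "quotient_dim_ge2 scale M N \<longleftrightarrow>
     (\<exists>x\<in>M. \<exists>y\<in>M. \<forall>a b. scale a x + scale b y \<in> N \<longrightarrow> a = 0 \<and> b = 0)"

definition stratification :: "('a::field \<Rightarrow> 'b::ab_group_add \<Rightarrow> 'b) \<Rightarrow> ('b \<Rightarrow> 'b) \<Rightarrow> ('i \<times> 'i) set \<Rightarrow> ('i \<Rightarrow> 'b set) \<Rightarrow> bool" where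
  "stratification scale u r M \<longleftrightarrow>
     Well_order r \<and> Field r \<noteq> {} \<and>
     (\<forall>\<alpha>\<in>Field r. submodule scale u (M \<alpha>)) \<and>
     (\<forall>\<alpha>\<in>Field r. \<forall>\<beta>\<in>Field r. (\<beta>, \<alpha>) \<in> r \<longrightarrow> M \<beta> \<subseteq> M \<alpha>) \<and>
     (\<forall>\<alpha>\<in>Field r. nonzero_cyclic_quotient scale u (M \<alpha>) (lower_sum scale r M \<alpha>)) \<and>
     module.span scale (\<Union>\<alpha>\<in>Field r. M \<alpha>) = UNIV"

definition is_minimum :: "('i \<times> 'i) set \<Rightarrow> 'i \<Rightarrow> bool" where
  "is_minimum r \<alpha> \<longleftrightarrow> \<alpha> \<in> Field r \<and> (\<forall>\<beta>\<in>Field r. (\<alpha>, \<beta>) \<in> r)"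

definition is_successor_of :: "('i \<times> 'i) set \<Rightarrow> 'i \<Rightarrow> 'i \<Rightarrow> bool" where
  "is_successor_of r \<alpha> \<beta> \<longleftrightarrow> (\<beta>, \<alpha>) \<in> r \<and> \<beta> \<noteq> \<alpha> \<and>
     \<not> (\<exists>\<gamma>. (\<beta>, \<gamma>) \<in> r \<and> \<beta> \<noteq> \<gamma> \<and> (\<gamma>, \<alpha>) \<in> r \<and> \<gamma> \<noteq> \<alpha>)"

definition has_maximum :: "('i \<times> 'i) set \<Rightarrow> bool" where
  "has_maximum r \<longleftrightarrow> (\<exists>\<alpha>\<in>Field r. \<forall>\<beta>\<in>Field r. (\<beta>, \<alpha>) \<in> r)"

definition good_stratification :: "('a::field \<Rightarrow> 'b::ab_group_add \<Rightarrow> 'b) \<Rightarrow> ('b \<Rightarrow> 'b) \<Rightarrow> ('i \<times> 'i) set \<Rightarrow> ('i \<Rightarrow> 'b set) \<Rightarrow> bool" where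
  "good_stratification scale u r M \<longleftrightarrow>
     stratification scale u r M \<and>
     (\<forall>\<alpha>\<in>Field r. (is_minimum r \<alpha> \<or> (\<exists>\<beta>\<in>Field r. is_successor_of r \<alpha> \<beta>)) \<longrightarrow>
        quotient_dim_ge2 scale (M \<alpha>) (lower_sum scale r M \<alpha>)) \<and>
     \<not> has_maximum r"

end

theory Submission
  imports Defs "HOL-Library.Nat_Bijection" "HOL-Library.Product_Lexorder"
begin

text \<open>Write u = c + w, so that w \<circ> w = 0. The space has a basis made of Jordan blocks of w:
  pairs {s, w s} for s \<in> S and kernel vectors t \<in> T. Since c is not a dominant eigenvalue, w has
  infinite rank, so S is infinite, while S \<union> T is countable. Enumerate S \<union> T along the ordinal
  \<omega>^2, placing the elements of T only at the limit positions \<omega>(i + 1), and let the stratum of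
  index \<alpha> be spanned by the blocks of the generators up to \<alpha>. The quotient at \<alpha> is then the
  cyclic module generated by the \<alpha>-th generator; at the minimum and at successors it is spanned by
  a pair {s, w s}, and \<omega>^2 has no largest element.\<close>

lemma under_subset_underS:
  assumes "Well_order r" "\<gamma> \<in> underS r \<alpha>"
  shows "under r \<gamma> \<subseteq> underS r \<alpha>"
proof
  interpret r: wo_rel r by (rule wo_rel.intro[OF assms(1)])
  fix \<delta>
  assume "\<delta> \<in> under r \<gamma>"
  then have \<delta>\<gamma>: "(\<delta>, \<gamma>) \<in> r"
    by (simp add: under_def)
  have \<gamma>\<alpha>: "(\<gamma>, \<alpha>) \<in> r" "\<gamma> \<noteq> \<alpha>"
    using assms(2) by (auto simp: underS_def)
  have "(\<delta>, \<alpha>) \<in> r"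
    using r.TRANS \<delta>\<gamma> \<gamma>\<alpha>(1) by (rule transD)
  moreover have "\<delta> \<noteq> \<alpha>"
    using antisymD[OF r.ANTISYM, of \<gamma> \<alpha>] \<delta>\<gamma> \<gamma>\<alpha> by blast
  ultimately show "\<delta> \<in> underS r \<alpha>"
    by (simp add: underS_def)
qed

context vector_space
begin

lemma not_in_span_of_independent:
  assumes "independent B" "A \<subseteq> B" "x \<in> B" "x \<notin> A"
  shows "x \<notin> span A"
proof -
  have "independent (insert x A)"
    by (rule independent_mono[OF assms(1)]) (simp add: assms(2,3))
  then show ?thesis
    using assms(4) by (simp add: independent_insert)
qed

lemma independent_Un:
  assumes "independent A" "independent B" "span A \<inter> span B \<subseteq> {0}"
  shows "independent (A \<union> B)"
  unfolding independent_explicit_finite_subsets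
proof (intro allI impI ballI)
  fix F v and f :: "'b \<Rightarrow> 'a"
  assume F: "F \<subseteq> A \<union> B" "finite F" "(\<Sum>v\<in>F. f v *s v) = 0" "v \<in> F"
  let ?a = "\<Sum>v\<in>F \<inter> A. f v *s v" and ?b = "\<Sum>v\<in>F - A. f v *s v"
  have "?a + ?b = 0"
    using F(2,3) by (metis sum.Int_Diff)
  then have ab: "?a = - ?b"
    by (simp add: eq_neg_iff_add_eq_0)
  have "?b \<in> span B"
    using F(1) by (intro span_sum span_scale span_base) auto
  then have "?a \<in> span B"
    unfolding ab by (rule span_neg)
  moreover have "?a \<in> span A"
    by (intro span_sum span_scale span_base) auto
  ultimately have a0: "?a = 0"
    using assms(3) by blast
  then have b0: "?b = 0"
    using ab by simp
  show "f v = 0"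
  proof (cases "v \<in> A")
    case True
    then show ?thesis
      using independentD[OF assms(1), of "F \<inter> A" f v] a0 F by auto
  next
    case False
    then show ?thesis
      using independentD[OF assms(2), of "F - A" f v] b0 F by auto
  qed
qed

lemma countable_independent:
  assumes "countable C" "span C = UNIV" "independent X"
  shows "countable X"
proof -
  have "\<exists>F. finite F \<and> F \<subseteq> C \<and> x \<in> span F" for x
  proof -
    have "x \<in> span C"
      using assms(2) by simp
    then obtain t r where t: "finite t" "t \<subseteq> C" "x = (\<Sum>a\<in>t. r a *s a)"
      unfolding span_explicit by blast
    have "(\<Sum>a\<in>t. r a *s a) \<in> span t"
      by (intro span_sum span_scale span_base)
    with t show ?thesis
      by blast
  qed
  then obtain support
    where support: "\<And>x. finite (support x) \<and> support x \<subseteq> C \<and> x \<in> span (support x)"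
    by metis
  have fin: "finite {x\<in>X. support x = F}" if "finite F" for F
  proof -
    have "independent {x\<in>X. support x = F}"
      using assms(3) by (rule independent_mono) blast
    moreover have "{x\<in>X. support x = F} \<subseteq> span F"
      using support by blast
    ultimately show ?thesis
      using independent_span_bound[OF that] by blast
  qed
  have "countable (\<Union>F\<in>{F. finite F \<and> F \<subseteq> C}. {x\<in>X. support x = F})"
  proof (rule countable_UN[OF countable_Collect_finite_subset[OF assms(1)]])
    fix F
    assume "F \<in> {F. finite F \<and> F \<subseteq> C}"
    then show "countable {x\<in>X. support x = F}"
      using fin countable_finite by blast
  qed
  moreover have "X \<subseteq> (\<Union>F\<in>{F. finite F \<and> F \<subseteq> C}. {x\<in>X. support x = F})"
    using support by blast
  ultimately show ?thesis
    using countable_subset by blast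
qed

lemma independent_if_independent_image:
  assumes hom: "module_hom scale scale w"
    and indep: "independent (w ` B)" and inj: "inj_on w B"
  shows "independent B"
proof
  interpret w: module_hom scale scale w by (rule hom)
  assume "dependent B"
  then obtain a where a: "a \<in> B" "a \<in> span (B - {a})"
    unfolding dependent_def by blast
  have "w a \<in> span (w ` (B - {a}))"
    unfolding w.span_image using a(2) by (rule imageI)
  also have "w ` (B - {a}) = w ` B - {w a}"
    using inj a(1) by (simp add: inj_on_image_set_diff)
  finally show False
    using indep a(1) unfolding dependent_def by blast
qed

lemma independent_preimage_Un_kernel:
  assumes hom: "module_hom scale scale w"
    and indep_image: "independent (w ` S)" and inj: "inj_on w S"
    and indep_K: "independent K" and K_kernel: "\<And>k. k \<in> K \<Longrightarrow> w k = 0"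
  shows "independent (S \<union> K)"
proof (rule independent_Un)
  interpret w: module_hom scale scale w by (rule hom)
  show "independent S"
    using independent_if_independent_image[OF hom indep_image inj] .
  show "independent K" by (rule indep_K)
  have inj_span: "inj_on w (span S)"
    by (rule w.inj_on_span_independent_image[OF indep_image inj])
  show "span S \<inter> span K \<subseteq> {0}"
  proof
    fix x assume x: "x \<in> span S \<inter> span K"
    then have "w x = w 0"
      using w.eq_0_on_span[of K x] K_kernel by (simp add: w.zero)
    then have "x = 0"
      using inj_onD[OF inj_span] x span_zero by blast
    then show "x \<in> {0}" by simp
  qed
qed

lemma span_preimage_Un_kernel:
  assumes hom: "module_hom scale scale w"
    and span_image: "span (w ` S) = range w" and kernel: "{x. w x = 0} \<subseteq> span K"
  shows "span (S \<union> K) = UNIV"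
proof -
  interpret w: module_hom scale scale w by (rule hom)
  have "x \<in> span (S \<union> K)" for x
  proof -
    have "w x \<in> w ` span S"
      using span_image w.span_image by simp
    then obtain y where y: "y \<in> span S" "w y = w x"
      by (metis imageE)
    then have "w (x - y) = 0"
      by (simp add: w.diff)
    then have "x - y \<in> span K"
      using kernel by blast
    then have "(x - y) + y \<in> span (S \<union> K)"
      using y(1) span_mono[of S "S \<union> K"] span_mono[of K "S \<union> K"]
      by (blast intro: span_add)
    then show ?thesis by simp
  qed
  then show ?thesis by blast
qed

lemma module_hom_minus_scale:
  assumes "Vector_Spaces.linear scale scale u"
  shows "module_hom scale scale (\<lambda>x. u x - scale c x)"
proof -
  have "module_hom scale scale u"
    using assms module_hom_iff_linear by blast
  then show ?thesis
    unfolding module_hom_iff using module_axioms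
    by (simp add: scale_right_diff_distrib algebra_simps)
qed

lemma rank_less_dim_if_finite_rank:
  assumes "is_basis scale C" "infinite C"
    and "independent B" "span B = range f" "finite B"
  shows "rank_less_dim scale f"
  unfolding rank_less_dim_def
proof (rule exI[of _ B], rule exI[of _ C], intro conjI)
  show "(card_of B, card_of C) \<in> ordLess"
    using finite_ordLess_infinite[OF card_of_Well_order card_of_Well_order] assms(2,5)
    by (simp add: Field_card_of)
qed (use assms in simp_all)

lemma scale_in_span_iff:
  assumes "a \<noteq> 0"
  shows "scale a x \<in> span K \<longleftrightarrow> x \<in> span K"
  using span_scale[of "scale a x" K "inverse a"] span_scale[of x K a] assms by auto

lemma quotient_dim_ge2_square_zero:
  assumes hom: "module_hom scale scale w" and square_zero: "\<And>y. w (w y) = 0"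
    and stable: "\<And>y. y \<in> span K \<Longrightarrow> w y \<in> span K" and notin: "w x \<notin> span K"
  shows "quotient_dim_ge2 scale (span (insert x (insert (w x) K))) (span K)"
  unfolding quotient_dim_ge2_def
proof (rule bexI[of _ x], rule bexI[of _ "w x"], intro allI impI)
  interpret w: module_hom scale scale w by (rule hom)
  fix a b
  assume comb: "scale a x + scale b (w x) \<in> span K"
  \<comment> \<open>applying w kills the second term\<close>
  have "w (scale a x + scale b (w x)) = scale a (w x)"
    using square_zero by (simp add: w.add w.scale)
  then have "scale a (w x) \<in> span K"
    using stable[OF comb] by simp
  then have "a = 0"
    using notin scale_in_span_iff by blast
  then have "scale b (w x) \<in> span K"
    using comb by simp
  then have "b = 0"
    using notin scale_in_span_iff by blast
  with \<open>a = 0\<close> show "a = 0 \<and> b = 0" ..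
qed (simp_all add: span_base)

lemma nonzero_cyclic_quotient_of_block:
  fixes u w :: "'b \<Rightarrow> 'b" and x :: 'b and K :: "'b set"
  defines "M \<equiv> span (insert x (insert (w x) K))"
  assumes u_eq: "\<And>y. u y = w y + scale c y" and stable: "u ` M \<subseteq> M"
    and notin: "x \<notin> span K"
  shows "nonzero_cyclic_quotient scale u M (span K)"
  unfolding nonzero_cyclic_quotient_def
proof (intro conjI bexI[of _ x])
  have x: "x \<in> M"
    unfolding M_def by (rule span_base) simp
  then show "\<not> M \<subseteq> span K"
    using notin by blast
  show "x \<in> M" by (rule x)
  let ?O = "span K \<union> range (\<lambda>k. (u ^^ k) x)"
  have "(u ^^ k) x \<in> M" for k
    using x stable by (induction k) auto
  moreover have "span K \<subseteq> M"
    unfolding M_def by (rule span_mono) blast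
  ultimately have "?O \<subseteq> M"
    by blast
  then have span_O: "span ?O \<subseteq> M"
    unfolding M_def by (rule span_minimal[OF _ subspace_span])
  have orbit: "(u ^^ k) x \<in> span ?O" for k
    by (rule span_base) blast
  have "w x = u x - scale c x"
    by (simp add: u_eq)
  then have "w x \<in> span ?O"
    using orbit[of 0] orbit[of 1] by (simp add: span_diff span_scale)
  moreover have "K \<subseteq> span ?O"
    using span_superset[of K] span_superset[of ?O] by blast
  ultimately have "insert x (insert (w x) K) \<subseteq> span ?O"
    using orbit[of 0] by simp
  then have "M \<subseteq> span ?O"
    unfolding M_def by (rule span_minimal[OF _ subspace_span])
  with span_O show "M = span ?O" by blast
qed

lemma lower_sum_of_initial_segments:
  assumes "Well_order r"
  shows "lower_sum scale r (\<lambda>\<alpha>. span (\<Union>\<beta>\<in>under r \<alpha>. B \<beta>)) \<alpha> = span (\<Union>\<beta>\<in>underS r \<alpha>. B \<beta>)"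
proof -
  interpret r: wo_rel r by (rule wo_rel.intro[OF assms])
  let ?L = "\<Union>\<gamma>\<in>underS r \<alpha>. span (\<Union>\<beta>\<in>under r \<gamma>. B \<beta>)"
  have below: "{\<gamma>. (\<gamma>, \<alpha>) \<in> r \<and> \<gamma> \<noteq> \<alpha>} = underS r \<alpha>"
    by (auto simp: underS_def)
  have "?L \<subseteq> span (\<Union>\<beta>\<in>underS r \<alpha>. B \<beta>)"
    using under_subset_underS[OF assms] by (intro UN_least span_mono) blast
  then have "span ?L \<subseteq> span (\<Union>\<beta>\<in>underS r \<alpha>. B \<beta>)"
    by (rule span_minimal[OF _ subspace_span])
  moreover have "B \<gamma> \<subseteq> span (\<Union>\<beta>\<in>under r \<gamma>. B \<beta>)" if "\<gamma> \<in> underS r \<alpha>" for \<gamma>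
  proof -
    have "\<gamma> \<in> Field r"
      using that underS_Field by fast
    then have "\<gamma> \<in> under r \<gamma>"
      by (rule Refl_under_in[OF r.REFL])
    then show ?thesis
      using span_superset by blast
  qed
  then have "span (\<Union>\<beta>\<in>underS r \<alpha>. B \<beta>) \<subseteq> span ?L"
    by (intro span_mono) blast
  moreover have "lower_sum scale r (\<lambda>\<alpha>. span (\<Union>\<beta>\<in>under r \<alpha>. B \<beta>)) \<alpha> = span ?L"
    unfolding lower_sum_def below by simp
  ultimately show ?thesis
    by (simp only: subset_antisym)
qed

end

section \<open>Jordan bases of square-zero endomorphisms\<close>

locale square_zero_jordan_basis = vector_space scale
  for scale :: "'a::field \<Rightarrow> 'b::ab_group_add \<Rightarrow> 'b" +
  fixes w :: "'b \<Rightarrow> 'b" and S T :: "'b set"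
  assumes w_hom: "module_hom scale scale w"
    and w_square_zero: "w (w x) = 0"
    and independent_basis: "independent (S \<union> w ` S \<union> T)"
    and span_basis: "span (S \<union> w ` S \<union> T) = UNIV"
    and inj_on_S: "inj_on w S"
    and disjoint: "S \<inter> w ` S = {}" "S \<inter> T = {}" "w ` S \<inter> T = {}"
    and T_kernel: "t \<in> T \<Longrightarrow> w t = 0"

lemma (in vector_space) square_zero_jordan_basis_exists:
  assumes hom: "module_hom scale scale w" and square_zero: "\<And>x. w (w x) = 0"
  obtains S T where "square_zero_jordan_basis scale w S T" "span (w ` S) = range w"
proof -
  interpret w: module_hom scale scale w by (rule hom)
  obtain B1 where B1: "B1 \<subseteq> range w" "independent B1" "range w \<subseteq> span B1"
    using maximal_independent_subset by blast
  have "B1 \<subseteq> {x. w x = 0}"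
    using B1(1) square_zero by auto
  then obtain B2 where B2: "B1 \<subseteq> B2" "B2 \<subseteq> {x. w x = 0}" "independent B2" "{x. w x = 0} \<subseteq> span B2"
    using maximal_independent_subset_extend[OF _ B1(2)] by blast
  define S where "S = inv w ` B1"
  have S: "w ` S = B1" "inj_on w S"
    using B1(1) unfolding S_def inj_on_def
    by (auto simp: image_inv_into_cancel) (metis f_inv_into_f subsetD)
  define T where "T = B2 - B1"
  have "0 \<notin> B1"
    using B1(2) dependent_zero by blast
  then have "w x \<noteq> 0" if "x \<in> S" for x
    using S(1) that by force
  then have disjoint: "S \<inter> w ` S = {}" "S \<inter> T = {}" "w ` S \<inter> T = {}"
    using S(1) B2(1,2) unfolding T_def by blast+
  have basis_eq: "S \<union> w ` S \<union> T = S \<union> B2"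
    using S(1) B2(1) unfolding T_def by auto
  have range_w: "span (w ` S) = range w"
    using S(1) B1 span_minimal[of B1 "range w"] w.subspace_image[OF subspace_UNIV] by auto
  have "independent (S \<union> B2)"
    using independent_preimage_Un_kernel[OF hom _ S(2) B2(3)] B1(2) B2(2) S(1) by auto
  moreover have "span (S \<union> B2) = UNIV"
    by (rule span_preimage_Un_kernel[OF hom range_w B2(4)])
  moreover have "\<forall>t. t \<in> T \<longrightarrow> w t = 0"
    using B2(2) unfolding T_def by auto
  ultimately have "square_zero_jordan_basis scale w S T"
    unfolding square_zero_jordan_basis_def square_zero_jordan_basis_axioms_def basis_eq
    using vector_space_axioms hom square_zero S(2) disjoint by blast
  then show ?thesis
    using range_w by (rule that)
qed

context square_zero_jordan_basis
begin

sublocale w: module_hom scale scale w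
  by (rule w_hom)

lemma span_blocks_w_stable:
  assumes "y \<in> span (X \<union> w ` X)"
  shows "w y \<in> span (X \<union> w ` X)"
proof -
  have "w ` (X \<union> w ` X) \<subseteq> span (X \<union> w ` X)"
    using w_square_zero by (auto intro: span_base span_zero)
  then have "span (w ` (X \<union> w ` X)) \<subseteq> span (X \<union> w ` X)"
    by (simp add: span_minimal)
  then show ?thesis
    using assms w.span_image by auto
qed

lemma not_in_span_blocks:
  assumes X: "X \<subseteq> S \<union> T" and y: "y \<in> S \<union> w ` S \<union> T" "y \<notin> X \<union> w ` X"
  shows "y \<notin> span (X \<union> w ` X)"
proof -
  have "X \<union> w ` X - {0} \<subseteq> S \<union> w ` S \<union> T"
    using X T_kernel by auto
  then have "y \<notin> span (X \<union> w ` X - {0})"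
    using not_in_span_of_independent[OF independent_basis] y by blast
  then show ?thesis by simp
qed

lemma zero_not_in_basis: "0 \<notin> S \<union> w ` S \<union> T"
proof
  assume "0 \<in> S \<union> w ` S \<union> T"
  then have "dependent (S \<union> w ` S \<union> T)"
    by (rule dependent_zero)
  with independent_basis show False
    by contradiction
qed

lemma generator_not_in_span_blocks:
  assumes X: "X \<subseteq> S \<union> T" and x: "x \<in> S \<union> T" "x \<notin> X"
  shows "x \<notin> span (X \<union> w ` X)"
proof (rule not_in_span_blocks[OF X])
  show "x \<in> S \<union> w ` S \<union> T"
    using x(1) by blast
  have "x \<notin> w ` X"
  proof
    assume "x \<in> w ` X"
    then obtain y where y: "y \<in> X" "x = w y"
      by blast
    show False
    proof (cases "y \<in> S")
      case True
      then have "x \<in> w ` S"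
        using y(2) by simp
      then show False
        using x(1) disjoint(1,3) by blast
    next
      case False
      then have "y \<in> T"
        using X y(1) by blast
      then have "x = 0"
        using y(2) T_kernel by simp
      then show False
        using x(1) zero_not_in_basis by simp
    qed
  qed
  then show "x \<notin> X \<union> w ` X"
    using x(2) by blast
qed

lemma image_not_in_span_blocks:
  assumes X: "X \<subseteq> S \<union> T" and x: "x \<in> S" "x \<notin> X"
  shows "w x \<notin> span (X \<union> w ` X)"
proof (rule not_in_span_blocks[OF X])
  have wx: "w x \<in> w ` S"
    using x(1) by (rule imageI)
  then show wx_basis: "w x \<in> S \<union> w ` S \<union> T"
    by blast
  have "w x \<notin> X"
    using wx X disjoint(1,3) by blast
  moreover have "w x \<notin> w ` X"
  proof
    assume "w x \<in> w ` X"
    then obtain y where y: "y \<in> X" "w x = w y"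
      by blast
    show False
    proof (cases "y \<in> S")
      case True
      then have "x = y"
        using inj_onD[OF inj_on_S y(2) x(1)] by simp
      then show False
        using x(2) y(1) by simp
    next
      case False
      then have "y \<in> T"
        using X y(1) by blast
      then have "w x = 0"
        using y(2) T_kernel by simp
      then show False
        using wx_basis zero_not_in_basis by simp
    qed
  qed
  ultimately show "w x \<notin> X \<union> w ` X"
    by blast
qed

lemma infinite_S:
  assumes "countably_infinite_dim scale" "span (w ` S) = range w" "\<not> rank_less_dim scale w"
  shows "infinite S"
proof
  obtain C where C: "is_basis scale C" "infinite C"
    using assms(1) unfolding countably_infinite_dim_def by blast
  assume "finite S"
  then have "rank_less_dim scale w"
    using rank_less_dim_if_finite_rank[OF C _ assms(2)] independent_mono[OF independent_basis]
    by blast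
  with assms(3) show False ..
qed

lemma countable_S_Un_T:
  assumes "countably_infinite_dim scale"
  shows "countable (S \<union> T)"
proof -
  obtain C where C: "is_basis scale C" "countable C"
    using assms unfolding countably_infinite_dim_def by blast
  then have "span C = UNIV"
    unfolding is_basis_def by blast
  moreover have "independent (S \<union> T)"
    using independent_basis by (rule independent_mono) blast
  ultimately show ?thesis
    by (rule countable_independent[OF C(2)])
qed

definition stratum :: "('i \<times> 'i) set \<Rightarrow> ('i \<Rightarrow> 'b) \<Rightarrow> 'i \<Rightarrow> 'b set" where
  "stratum r g \<alpha> = span (\<Union>\<beta>\<in>under r \<alpha>. {g \<beta>, w (g \<beta>)})"

context
  fixes r :: "('i \<times> 'i) set" and g :: "'i \<Rightarrow> 'b"
  assumes r: "Well_order r" "Field r = UNIV"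
    and g: "inj g" "range g = S \<union> T"
begin

lemma UN_blocks_eq: "(\<Union>\<beta>\<in>A. {g \<beta>, w (g \<beta>)}) = g ` A \<union> w ` g ` A"
  by auto

lemma stratum_eq:
  "stratum r g \<alpha> = span (insert (g \<alpha>) (insert (w (g \<alpha>)) (g ` underS r \<alpha> \<union> w ` g ` underS r \<alpha>)))"
proof -
  have "under r \<alpha> = insert \<alpha> (underS r \<alpha>)"
    using Refl_under_underS[of r \<alpha>] r by (auto simp: order_on_defs)
  then show ?thesis
    unfolding stratum_def UN_blocks_eq by (simp add: insert_commute)
qed

lemma lower_sum_stratum:
  "lower_sum scale r (stratum r g) \<alpha> = span (g ` underS r \<alpha> \<union> w ` g ` underS r \<alpha>)"
  using lower_sum_of_initial_segments[OF r(1), of "\<lambda>\<beta>. {g \<beta>, w (g \<beta>)}" \<alpha>]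
  unfolding stratum_def[abs_def] UN_blocks_eq .

lemma stratum_u_stable:
  assumes u_eq: "\<And>y. u y = w y + scale c y"
  shows "u ` stratum r g \<alpha> \<subseteq> stratum r g \<alpha>"
proof (rule image_subsetI)
  fix z
  assume z: "z \<in> stratum r g \<alpha>"
  then have "w z \<in> stratum r g \<alpha>"
    unfolding stratum_def UN_blocks_eq by (rule span_blocks_w_stable)
  then show "u z \<in> stratum r g \<alpha>"
    unfolding u_eq using z unfolding stratum_def by (intro span_add span_scale)
qed

lemma generators_below:
  "g ` underS r \<alpha> \<subseteq> S \<union> T" "g \<alpha> \<notin> g ` underS r \<alpha>"
  using g underS_notIn[of \<alpha> r] by (auto simp: inj_image_mem_iff)

lemma generators_in_stratum: "g \<alpha> \<in> stratum r g \<alpha>" "w (g \<alpha>) \<in> stratum r g \<alpha>"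
  unfolding stratum_eq by (rule span_base, simp)+

lemma stratum_mono:
  assumes "(\<beta>, \<alpha>) \<in> r"
  shows "stratum r g \<beta> \<subseteq> stratum r g \<alpha>"
proof -
  have "under r \<beta> \<subseteq> under r \<alpha>"
    using under_incr[OF wo_rel.TRANS[OF wo_rel.intro[OF r(1)]] assms] .
  then show ?thesis
    unfolding stratum_def by (intro span_mono) blast
qed

lemma nonzero_cyclic_quotient_stratum:
  assumes u_eq: "\<And>y. u y = w y + scale c y"
  shows "nonzero_cyclic_quotient scale u (stratum r g \<alpha>) (lower_sum scale r (stratum r g) \<alpha>)"
proof -
  have "g \<alpha> \<in> S \<union> T"
    using g(2) by blast
  then have "g \<alpha> \<notin> span (g ` underS r \<alpha> \<union> w ` g ` underS r \<alpha>)"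
    by (rule generator_not_in_span_blocks[OF generators_below(1) _ generators_below(2)])
  moreover have "u ` stratum r g \<alpha> \<subseteq> stratum r g \<alpha>"
    by (rule stratum_u_stable[OF u_eq])
  ultimately show ?thesis
    unfolding lower_sum_stratum stratum_eq by (rule nonzero_cyclic_quotient_of_block[OF u_eq, rotated])
qed

lemma span_strata: "span (\<Union>\<alpha>. stratum r g \<alpha>) = UNIV"
proof -
  have "S \<union> w ` S \<union> T \<subseteq> range g \<union> w ` range g"
    unfolding g(2) by blast
  also have "\<dots> \<subseteq> (\<Union>\<alpha>. stratum r g \<alpha>)"
    using generators_in_stratum by fast
  finally show ?thesis
    using span_mono[of "S \<union> w ` S \<union> T"] span_basis by blast
qed

lemma stratification_stratum:
  assumes u_eq: "\<And>y. u y = w y + scale c y"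
  shows "stratification scale u r (stratum r g)"
proof -
  have "submodule scale u (stratum r g \<alpha>)" for \<alpha>
    unfolding submodule_def using stratum_u_stable[OF u_eq] by (simp add: stratum_def)
  then show ?thesis
    unfolding stratification_def r(2)
    using r(1)[unfolded r(2)] stratum_mono nonzero_cyclic_quotient_stratum[OF u_eq] span_strata
    by (intro conjI ballI impI) auto
qed

lemma good_stratification_stratum:
  assumes u_eq: "\<And>y. u y = w y + scale c y"
    and two_blocks: "\<And>\<alpha>. is_minimum r \<alpha> \<or> (\<exists>\<beta>. is_successor_of r \<alpha> \<beta>) \<Longrightarrow> g \<alpha> \<in> S"
    and no_max: "\<not> has_maximum r"
  shows "good_stratification scale u r (stratum r g)"
proof -
  have "quotient_dim_ge2 scale (stratum r g \<alpha>) (lower_sum scale r (stratum r g) \<alpha>)" if "g \<alpha> \<in> S" for \<alpha>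
    unfolding lower_sum_stratum stratum_eq
    using image_not_in_span_blocks[OF generators_below(1) that generators_below(2)]
    by (intro quotient_dim_ge2_square_zero w_hom w_square_zero span_blocks_w_stable)
  then show ?thesis
    unfolding good_stratification_def r(2)
    using stratification_stratum[OF u_eq] two_blocks no_max by blast
qed

end

end

section \<open>The ordinal \<omega>^2\<close>

lemma Field_inv_image_le:
  fixes f :: "'i \<Rightarrow> 'a::preorder"
  shows "Field {(m, n). f m \<le> f n} = UNIV"
  unfolding Field_def by auto

lemma Well_order_inv_image_le:
  fixes f :: "'i \<Rightarrow> 'a::wellorder"
  assumes "inj f"
  shows "Well_order {(m, n). f m \<le> f n}"
  unfolding well_order_on_def Field_inv_image_le
proof
  show "linear_order_on UNIV {(m, n). f m \<le> f n}"
    unfolding linear_order_on_def partial_order_on_def preorder_on_def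
  proof (intro conjI)
    show "{(m, n). f m \<le> f n} \<subseteq> UNIV \<times> UNIV"
      by simp
    show "refl_on UNIV {(m, n). f m \<le> f n}"
      by (auto simp: refl_on_def)
    show "trans {(m, n). f m \<le> f n}"
      by (auto simp: trans_def)
    show "antisym {(m, n). f m \<le> f n}"
      using assms by (auto simp: antisym_def inj_eq)
    show "total_on UNIV {(m, n). f m \<le> f n}"
      by (auto simp: total_on_def)
  qed
  have "{(m, n). f m \<le> f n} - Id \<subseteq> inv_image {(x, y). x < y} f"
    using assms by (auto simp: inj_eq order_less_le)
  then show "wf ({(m, n). f m \<le> f n} - Id)"
    by (rule wf_subset[OF wf_inv_image[OF wf]])
qed

text \<open>\<omega>^2 realised on \<open>nat\<close>: n stands for the pair prod_decode n, ordered lexicographically.\<close>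

definition omega2 :: "(nat \<times> nat) set" where
  "omega2 = {(m, n). prod_decode m \<le> prod_decode n}"

lemma Well_order_omega2: "Well_order omega2"
  unfolding omega2_def by (rule Well_order_inv_image_le) (rule inj_prod_decode)

lemma Field_omega2: "Field omega2 = UNIV"
  unfolding omega2_def by (rule Field_inv_image_le)

lemma omega2_no_maximum: "\<not> has_maximum omega2"
proof
  assume "has_maximum omega2"
  then obtain \<alpha> where "\<forall>\<beta>. (\<beta>, \<alpha>) \<in> omega2"
    unfolding has_maximum_def Field_omega2 by blast
  then have "(prod_encode (fst (prod_decode \<alpha>), Suc (snd (prod_decode \<alpha>))), \<alpha>) \<in> omega2" ..
  then show False
    unfolding omega2_def by (simp add: less_eq_prod_def)
qed

lemma omega2_limit:
  fixes i :: nat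
  defines "lim \<equiv> prod_encode (Suc i, 0)"
  shows "\<not> is_minimum omega2 lim" "\<not> is_successor_of omega2 lim \<beta>"
proof
  assume "is_minimum omega2 lim"
  then have "(lim, prod_encode (0, 0)) \<in> omega2"
    unfolding is_minimum_def Field_omega2 by blast
  then show False
    unfolding omega2_def lim_def by (simp add: less_eq_prod_def)
next
  show "\<not> is_successor_of omega2 lim \<beta>"
  proof
    assume succ: "is_successor_of omega2 lim \<beta>"
    obtain j k where \<beta>: "prod_decode \<beta> = (j, k)"
      by (metis surj_pair)
    have "(\<beta>, lim) \<in> omega2" "\<beta> \<noteq> lim"
      using succ unfolding is_successor_of_def by blast+
    moreover have "prod_decode \<beta> \<noteq> (Suc i, 0)"
      using \<open>\<beta> \<noteq> lim\<close> unfolding lim_def by (metis prod_decode_inverse)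
    ultimately have "j \<le> i"
      using \<beta> unfolding omega2_def lim_def by (auto simp: less_eq_prod_def)
    define \<gamma> where "\<gamma> = prod_encode (j, Suc k)"
    have "(\<beta>, \<gamma>) \<in> omega2 \<and> \<beta> \<noteq> \<gamma> \<and> (\<gamma>, lim) \<in> omega2 \<and> \<gamma> \<noteq> lim"
      using \<open>j \<le> i\<close> \<beta> unfolding omega2_def \<gamma>_def lim_def
      by (auto simp: less_eq_prod_def)
    then show False
      using succ unfolding is_successor_of_def by blast
  qed
qed

lemma omega2_limit_positions:
  "inj (\<lambda>i. prod_encode (Suc i, 0))" "infinite (- range (\<lambda>i. prod_encode (Suc i, 0)))"
proof -
  show "inj (\<lambda>i. prod_encode (Suc i, 0))"
    by (auto intro: injI)
  have "range (\<lambda>k. prod_encode (0, k)) \<subseteq> - range (\<lambda>i. prod_encode (Suc i, 0))"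
    by auto
  moreover have "infinite (range (\<lambda>k. prod_encode (0, k)))"
    by (rule range_inj_infinite) (auto intro: injI)
  ultimately show "infinite (- range (\<lambda>i. prod_encode (Suc i, 0)))"
    using finite_subset by blast
qed

lemma enumeration_with_prescribed_positions:
  fixes S T :: "'b set" and p :: "nat \<Rightarrow> nat"
  assumes S: "countable S" "infinite S" and T: "countable T" and disjoint: "S \<inter> T = {}"
    and p: "inj p" "infinite (- range p)"
  obtains g :: "nat \<Rightarrow> 'b" where "inj g" "range g = S \<union> T" "\<And>n. g n \<in> T \<Longrightarrow> n \<in> range p"
proof -
  define pos where "pos = p \<circ> to_nat_on T"
  have pos: "bij_betw pos T (pos ` T)"
    unfolding pos_def using inj_on_to_nat_on[OF T] p(1)
    by (intro inj_on_imp_bij_betw comp_inj_on) (auto intro: inj_on_subset)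
  define R where "R = - pos ` T"
  have "- range p \<subseteq> R"
    unfolding R_def pos_def by auto
  then have "infinite R"
    using p(2) finite_subset by blast
  then have "bij_betw (to_nat_on R) R UNIV"
    by (intro to_nat_on_infinite countableI_type)
  then obtain \<rho> where \<rho>: "bij_betw \<rho> R S"
    using bij_betw_trans bij_betw_from_nat_into[OF S] by blast
  define g where "g n = (if n \<in> pos ` T then the_inv_into T pos n else \<rho> n)" for n
  have "bij_betw g (pos ` T) T"
    using bij_betw_the_inv_into[OF pos] bij_betw_cong[of "pos ` T" g] unfolding g_def by simp
  moreover have g_R: "bij_betw g R S"
    using \<rho> bij_betw_cong[of R g] unfolding g_def R_def by simp
  ultimately have "bij_betw g (pos ` T \<union> R) (T \<union> S)"
    using disjoint by (intro bij_betw_combine) auto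
  then have g: "bij_betw g UNIV (S \<union> T)"
    unfolding R_def by (simp add: Un_commute)
  show ?thesis
  proof (rule that)
    show "inj g" "range g = S \<union> T"
      using g by (auto simp: bij_betw_def)
    fix n
    assume "g n \<in> T"
    then have "n \<notin> R"
      using g_R disjoint bij_betwE by blast
    then show "n \<in> range p"
      unfolding R_def pos_def by auto
  qed
qed

lemma omega2_enumeration:
  fixes S T :: "'b set"
  assumes "infinite S" "countable (S \<union> T)" "S \<inter> T = {}"
  obtains g :: "nat \<Rightarrow> 'b" where "inj g" "range g = S \<union> T"
    "\<And>\<alpha>. is_minimum omega2 \<alpha> \<or> (\<exists>\<beta>. is_successor_of omega2 \<alpha> \<beta>) \<Longrightarrow> g \<alpha> \<in> S"
proof -
  have "countable S" "countable T"
    using assms(2) by simp_all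
  then obtain g where g: "inj g" "range g = S \<union> T"
    and g_T: "\<And>n. g n \<in> T \<Longrightarrow> n \<in> range (\<lambda>i. prod_encode (Suc i, 0))"
    using enumeration_with_prescribed_positions[OF _ assms(1) _ assms(3) omega2_limit_positions]
    by blast
  have "g \<alpha> \<in> S" if "is_minimum omega2 \<alpha> \<or> (\<exists>\<beta>. is_successor_of omega2 \<alpha> \<beta>)" for \<alpha>
  proof (rule ccontr)
    assume "g \<alpha> \<notin> S"
    moreover have "g \<alpha> \<in> S \<union> T"
      using g(2) rangeI[of g \<alpha>] by simp
    ultimately have "\<alpha> \<in> range (\<lambda>i. prod_encode (Suc i, 0))"
      using g_T by blast
    then obtain i where "\<alpha> = prod_encode (Suc i, 0)"
      by blast
    then show False
      using that omega2_limit[of i] by simp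
  qed
  with g show ?thesis
    by (rule that)
qed

theorem lemma5:
  fixes scale :: "'a::field \<Rightarrow> 'b::ab_group_add \<Rightarrow> 'b"
    and u :: "'b \<Rightarrow> 'b" and c :: 'a
  assumes "vector_space scale"
    and "countably_infinite_dim scale"
    and "Vector_Spaces.linear scale scale u"
    and "\<forall>\<mu>. \<not> dominant_eigenvalue scale u \<mu>"
    and "\<forall>x. (\<lambda>y. u y - scale c y) (u x - scale c x) = 0"
  shows "\<exists>(r :: (nat \<times> nat) set) (M :: nat \<Rightarrow> 'b set). good_stratification scale u r M"
proof -
  interpret vector_space scale by (rule assms(1))
  define w where "w x = u x - scale c x" for x
  have "module_hom scale scale w"
    unfolding w_def[abs_def] using assms(3) by (rule module_hom_minus_scale)
  moreover have "w (w x) = 0" for x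
    using assms(5) unfolding w_def by simp
  ultimately obtain S T
    where basis: "square_zero_jordan_basis scale w S T" and range_w: "span (w ` S) = range w"
    by (rule square_zero_jordan_basis_exists)
  interpret square_zero_jordan_basis scale w S T by (rule basis)
  have "\<not> rank_less_dim scale w"
    using assms(4) unfolding dominant_eigenvalue_def w_def[abs_def] by blast
  then have "infinite S"
    by (rule infinite_S[OF assms(2) range_w])
  then obtain g where g: "inj g" "range g = S \<union> T"
    and two_blocks: "\<And>\<alpha>. is_minimum omega2 \<alpha> \<or> (\<exists>\<beta>. is_successor_of omega2 \<alpha> \<beta>) \<Longrightarrow> g \<alpha> \<in> S"
    using omega2_enumeration[OF _ countable_S_Un_T[OF assms(2)] disjoint(2)] by blast
  have "u x = w x + scale c x" for x
    unfolding w_def by simp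
  then have "good_stratification scale u omega2 (stratum omega2 g)"
    by (rule good_stratification_stratum[OF Well_order_omega2 Field_omega2 g _ two_blocks
          omega2_no_maximum])
  then show ?thesis by blast
qed

end
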